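(* For all $a,b\in\mathbb{C}$ and integers $n\ge0$, $$\sum_{k=0}^n\binom{n}{k}a^kb^{n-k}H_k(2)=H_n(2)(a+b)^n+2\sum_{k=1}^n(a+b)^{n-k}b^k\,\frac{H_{k-1}-H_{n-k}}{k}.$$
   Context: $H_n=\sum_{k=1}^n\frac1k$ (with $H_0=0$) and $H_n^{(2)}=\sum_{k=1}^n\frac1{k^2}$. The multiple harmonic-like number $H_n(2)=\sum_{1\le k_1+k_2\le n}\frac{1}{k_1k_2}$ (over positive integers), which equals $H_n^2-H_n^{(2)}$. Convention $0^0=1$. *)

theory Defs
  imports "HOL-Analysis.Analysis"
begin

definition mharm2 :: "nat \<Rightarrow> complex" where
  "mharm2 n = (\<Sum>(k1, k2) \<in> {(k1, k2). 1 \<le> k1 \<and> 1 \<le> k2 \<and> k1 + k2 \<le> n}.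
                 1 / (of_nat k1 * of_nat k2))"

end

theory Submission
  imports Defs
begin

text \<open>
  Write S_n f = sum_k (n choose k) a^k b^(n-k) f(k). Pascal's rule gives
  S_(n+1) f = (a + b) S_n f + a S_n (Delta f), and absorbing 1/(k+1) into the binomial
  coefficient turns a S_n (k \<mapsto> g(k+1)/(k+1)) into (S_(n+1) g - b^(n+1) g(0))/(n+1).
  Since Delta H_k(2) = 2 H_k/(k+1), the transform of H_k(2) is thereby reduced to that of
  H_(k-1), which is computed the same way. The closed form then follows by induction on n,
  the only further ingredient being the partial fractions
  1/(k(n+1-k)) = (1/k + 1/(n+1-k))/(n+1).
\<close>

definition binomial_transform :: "'a::comm_ring_1 \<Rightarrow> 'a \<Rightarrow> nat \<Rightarrow> (nat \<Rightarrow> 'a) \<Rightarrow> 'a" where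
  "binomial_transform a b n f = (\<Sum>k=0..n. of_nat (n choose k) * a ^ k * b ^ (n - k) * f k)"

lemma binomial_transform_0 [simp]: "binomial_transform a b 0 f = f 0"
  by (simp add: binomial_transform_def)

lemma binomial_transform_diff:
  "binomial_transform a b n (\<lambda>k. f k - g k) = binomial_transform a b n f - binomial_transform a b n g"
  unfolding binomial_transform_def by (simp add: sum_subtractf[symmetric] algebra_simps)

lemma binomial_transform_mult:
  "binomial_transform a b n (\<lambda>k. x * f k) = x * binomial_transform a b n f"
  unfolding binomial_transform_def by (simp add: sum_distrib_left algebra_simps)

lemma binomial_transform_const: "binomial_transform a b n (\<lambda>k. 1) = (a + b) ^ n"
  unfolding binomial_transform_def binomial_ring by (simp add: atLeast0AtMost)

lemma binomial_transform_Suc: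
  "binomial_transform a b (Suc n) f
     = b * binomial_transform a b n f + a * binomial_transform a b n (\<lambda>k. f (Suc k))"
proof -
  let ?T = "\<lambda>m. \<Sum>j=0..n. of_nat (m choose Suc j) * a ^ Suc j * b ^ (n - j) * f (Suc j)"
  have "binomial_transform a b (Suc n) f = b ^ Suc n * f 0 + ?T (Suc n)"
    unfolding binomial_transform_def
    by (simp add: sum.atLeast0_atMost_Suc_shift del: sum.cl_ivl_Suc)
  moreover have "?T (Suc n) = a * binomial_transform a b n (\<lambda>k. f (Suc k)) + ?T n"
    unfolding binomial_transform_def
    by (simp add: sum.distrib[symmetric] sum_distrib_left algebra_simps binomial_eq_0)
  moreover have "b * binomial_transform a b n f
      = (\<Sum>k=0..Suc n. of_nat (n choose k) * a ^ k * b ^ (Suc n - k) * f k)"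
    unfolding binomial_transform_def by (simp add: sum_distrib_left algebra_simps Suc_diff_le binomial_eq_0)
  moreover have "\<dots> = b ^ Suc n * f 0 + ?T n"
    by (simp add: sum.atLeast0_atMost_Suc_shift del: sum.cl_ivl_Suc)
  ultimately show ?thesis by simp
qed

lemma binomial_transform_Suc_diff:
  "binomial_transform a b (Suc n) f
     = (a + b) * binomial_transform a b n f + a * binomial_transform a b n (\<lambda>k. f (Suc k) - f k)"
  by (simp add: binomial_transform_Suc binomial_transform_diff algebra_simps)

lemma binomial_transform_shift_div:
  fixes a b :: "'a::field_char_0"
  shows "a * binomial_transform a b n (\<lambda>k. f (Suc k) / of_nat (Suc k))
           = (binomial_transform a b (Suc n) f - b ^ Suc n * f 0) / of_nat (Suc n)"
proof -
  have choose_Suc: "of_nat (Suc n choose Suc j) = (of_nat (Suc n) * of_nat (n choose j) / of_nat (Suc j) :: 'a)"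
    for j
  proof -
    have "(of_nat (Suc n choose Suc j) :: 'a) * of_nat (Suc j) = of_nat (Suc n) * of_nat (n choose j)"
      using Suc_times_binomial_eq[of n j] by (metis of_nat_mult)
    then show ?thesis by (simp add: field_simps del: of_nat_Suc)
  qed
  have "binomial_transform a b (Suc n) f - b ^ Suc n * f 0
      = (\<Sum>j=0..n. of_nat (Suc n choose Suc j) * a ^ Suc j * b ^ (n - j) * f (Suc j))"
    unfolding binomial_transform_def
    by (simp add: sum.atLeast0_atMost_Suc_shift del: sum.cl_ivl_Suc)
  also have "\<dots> = of_nat (Suc n) * (a * binomial_transform a b n (\<lambda>k. f (Suc k) / of_nat (Suc k)))"
    unfolding binomial_transform_def choose_Suc
    by (simp add: sum_distrib_left algebra_simps del: of_nat_Suc)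
  finally show ?thesis by (simp add: field_simps del: of_nat_Suc)
qed

lemma binomial_transform_inverse_Suc:
  fixes a b :: "'a::field_char_0"
  shows "a * binomial_transform a b n (\<lambda>k. inverse (of_nat (Suc k)))
           = ((a + b) ^ Suc n - b ^ Suc n) / of_nat (Suc n)"
  using binomial_transform_shift_div[of a b n "\<lambda>k. 1"] binomial_transform_const[of a b "Suc n"]
  by (simp add: divide_inverse)

lemma binomial_transform_inverse:
  fixes a b :: "'a::field_char_0"
  shows "binomial_transform a b n (\<lambda>j. inverse (of_nat j))
           = (\<Sum>k=1..n. ((a + b) ^ k - b ^ k) * b ^ (n - k) / of_nat k)"
proof (induction n)
  case (Suc n)
  have "binomial_transform a b (Suc n) (\<lambda>j. inverse (of_nat j))
      = b * binomial_transform a b n (\<lambda>j. inverse (of_nat j)) + ((a + b) ^ Suc n - b ^ Suc n) / of_nat (Suc n)"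
    by (simp add: binomial_transform_Suc binomial_transform_inverse_Suc del: of_nat_Suc)
  then show ?case
    unfolding Suc.IH sum_distrib_left by (simp add: Suc_diff_le algebra_simps del: of_nat_Suc)
qed simp

lemma binomial_transform_harm:
  fixes a b :: "'a::real_normed_field"
  shows "binomial_transform a b n harm
           = (a + b) ^ n * harm n - (\<Sum>k=1..n. (a + b) ^ (n - k) * b ^ k / of_nat k)"
proof (induction n)
  case (Suc n)
  have "binomial_transform a b (Suc n) harm
      = (a + b) * binomial_transform a b n harm + ((a + b) ^ Suc n - b ^ Suc n) / of_nat (Suc n)"
    by (simp add: binomial_transform_Suc_diff harm_Suc binomial_transform_inverse_Suc del: of_nat_Suc)
  also have "(a + b) * (\<Sum>k=1..n. (a + b) ^ (n - k) * b ^ k / of_nat k)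
      = (\<Sum>k=1..n. (a + b) ^ (Suc n - k) * b ^ k / of_nat k)"
    unfolding sum_distrib_left by (rule sum.cong) (auto simp: Suc_diff_le)
  ultimately show ?case
    unfolding Suc.IH by (simp add: harm_Suc algebra_simps diff_divide_distrib divide_inverse del: of_nat_Suc)
qed (simp add: harm_def)

lemma binomial_transform_harm_pred:
  fixes a b :: "'a::real_normed_field"
  shows "binomial_transform a b n (\<lambda>j. harm (j - 1))
           = ((a + b) ^ n + b ^ n) * harm n
             - (\<Sum>k=1..n. ((a + b) ^ (n - k) * b ^ k + (a + b) ^ k * b ^ (n - k)) / of_nat k)"
proof -
  define A where "A = (\<Sum>k=1..n. (a + b) ^ (n - k) * b ^ k / of_nat k)"
  define B where "B = (\<Sum>k=1..n. (a + b) ^ k * b ^ (n - k) / of_nat k)"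
  \<comment> \<open>also for \<open>j = 0\<close>, where \<open>j - 1 = 0\<close> and \<open>inverse 0 = 0\<close>\<close>
  have "harm (j - 1) = harm j - (inverse (of_nat j) :: 'a)" for j
    by (cases j) (simp_all add: harm_Suc harm_def)
  then have "binomial_transform a b n (\<lambda>j. harm (j - 1))
      = binomial_transform a b n harm - binomial_transform a b n (\<lambda>j. inverse (of_nat j))"
    by (simp add: binomial_transform_diff)
  moreover have "binomial_transform a b n harm = (a + b) ^ n * harm n - A"
    unfolding binomial_transform_harm A_def ..
  moreover have "binomial_transform a b n (\<lambda>j. inverse (of_nat j)) = B - b ^ n * harm n"
    unfolding binomial_transform_inverse B_def harm_def sum_distrib_left sum_subtractf[symmetric]
    by (rule sum.cong) (simp_all add: power_add[symmetric] divide_inverse algebra_simps)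
  moreover have "A + B = (\<Sum>k=1..n. ((a + b) ^ (n - k) * b ^ k + (a + b) ^ k * b ^ (n - k)) / of_nat k)"
    unfolding A_def B_def by (simp add: sum.distrib add_divide_distrib)
  ultimately show ?thesis by (simp add: algebra_simps)
qed

lemma sum_div_mult_complement:
  fixes h :: "nat \<Rightarrow> 'a::field_char_0"
  shows "(\<Sum>k=1..n. h k / (of_nat k * of_nat (Suc n - k)))
           = (\<Sum>k=1..n. (h k + h (Suc n - k)) / of_nat k) / of_nat (Suc n)"
proof -
  have partial_fractions: "h k / (of_nat k * of_nat (Suc n - k))
      = (h k / of_nat k + h k / of_nat (Suc n - k)) / of_nat (Suc n)" if "k \<in> {1..n}" for k
  proof -
    have complement: "(of_nat (Suc n - k) :: 'a) = of_nat (Suc n) - of_nat k"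
      using that by (simp add: of_nat_diff)
    have "(of_nat k :: 'a) \<noteq> 0" "(of_nat (Suc n) :: 'a) - of_nat k \<noteq> 0"
      using that by (auto simp del: of_nat_Suc)
    then show ?thesis unfolding complement by (simp add: field_simps del: of_nat_Suc)
  qed
  have reflect: "(\<Sum>k=1..n. h k / of_nat (Suc n - k)) = (\<Sum>k=1..n. h (Suc n - k) / of_nat k)"
    by (subst sum.atLeastAtMost_rev) (rule sum.cong, auto)
  have "(\<Sum>k=1..n. h k / (of_nat k * of_nat (Suc n - k)))
      = (\<Sum>k=1..n. (h k / of_nat k + h k / of_nat (Suc n - k)) / of_nat (Suc n))"
    using partial_fractions by (rule sum.cong[OF refl])
  also have "\<dots> = (\<Sum>k=1..n. h k / of_nat k + h (Suc n - k) / of_nat k) / of_nat (Suc n)"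
    by (simp only: sum_divide_distrib[symmetric] sum.distrib reflect)
  finally show ?thesis by (simp add: add_divide_distrib)
qed

lemma mharm2_eq_double_sum: "mharm2 n = (\<Sum>i=1..n. \<Sum>j=1..n-i. 1 / (of_nat i * of_nat j))"
proof -
  have "{(i, j). 1 \<le> i \<and> 1 \<le> j \<and> i + j \<le> n} = Sigma {1..n} (\<lambda>i. {1..n-i})"
    by auto
  then show ?thesis unfolding mharm2_def by (simp add: sum.Sigma)
qed

lemma mharm2_Suc: "mharm2 (Suc n) = mharm2 n + 2 * harm n / of_nat (Suc n)"
proof -
  have "mharm2 (Suc n) = (\<Sum>i=1..n. \<Sum>j=1..Suc n-i. 1 / (of_nat i * of_nat j))"
    unfolding mharm2_eq_double_sum by simp
  also have "\<dots> = mharm2 n + (\<Sum>i=1..n. 1 / (of_nat i * of_nat (Suc n - i)))"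
    unfolding mharm2_eq_double_sum sum.distrib[symmetric]
    by (rule sum.cong) (auto simp: Suc_diff_le simp del: of_nat_Suc)
  also have "(\<Sum>i=1..n. 1 / (of_nat i * of_nat (Suc n - i))) = 2 * harm n / (of_nat (Suc n) :: complex)"
    unfolding sum_div_mult_complement harm_def
    by (simp add: sum_distrib_left divide_inverse del: of_nat_Suc)
  finally show ?thesis .
qed

definition harm_gap_sum :: "'a::real_normed_field \<Rightarrow> 'a \<Rightarrow> nat \<Rightarrow> 'a" where
  "harm_gap_sum c b n = (\<Sum>k=1..n. c ^ (n - k) * b ^ k * ((harm (k - 1) - harm (n - k)) / of_nat k))"

lemma harm_gap_sum_Suc:
  "harm_gap_sum c b (Suc n)
     = c * harm_gap_sum c b n + b ^ Suc n * harm n / of_nat (Suc n)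
       - (\<Sum>k=1..n. c ^ (Suc n - k) * b ^ k / (of_nat k * of_nat (Suc n - k)))"
proof -
  have step: "c ^ (Suc n - k) * b ^ k * ((harm (k - 1) - harm (Suc n - k)) / of_nat k)
      = c * (c ^ (n - k) * b ^ k * ((harm (k - 1) - harm (n - k)) / of_nat k))
        - c ^ (Suc n - k) * b ^ k / (of_nat k * of_nat (Suc n - k))" if "k \<in> {1..n}" for k
  proof -
    have "Suc n - k = Suc (n - k)" using that by auto
    moreover have "(of_nat k :: 'a) \<noteq> 0" "(of_nat (Suc (n - k)) :: 'a) \<noteq> 0"
      using that by (auto simp del: of_nat_Suc)
    ultimately show ?thesis by (simp add: harm_Suc field_simps del: of_nat_Suc)
  qed
  have "harm_gap_sum c b (Suc n)
      = (\<Sum>k=1..n. c ^ (Suc n - k) * b ^ k * ((harm (k - 1) - harm (Suc n - k)) / of_nat k))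
        + b ^ Suc n * harm n / of_nat (Suc n)"
    unfolding harm_gap_sum_def by (simp add: harm_def del: of_nat_Suc)
  also have "(\<Sum>k=1..n. c ^ (Suc n - k) * b ^ k * ((harm (k - 1) - harm (Suc n - k)) / of_nat k))
      = c * harm_gap_sum c b n - (\<Sum>k=1..n. c ^ (Suc n - k) * b ^ k / (of_nat k * of_nat (Suc n - k)))"
    unfolding harm_gap_sum_def sum_distrib_left sum_subtractf[symmetric]
    using step by (rule sum.cong[OF refl])
  finally show ?thesis by simp
qed

lemma binomial_transform_mharm2:
  "binomial_transform a b n mharm2 = mharm2 n * (a + b) ^ n + 2 * harm_gap_sum (a + b) b n"
proof (induction n)
  case (Suc n)
  define c where "c = a + b"
  define N where "N = Suc n"
  define h where "h k = c ^ (N - k) * b ^ k" for k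
  define \<Sigma> where "\<Sigma> = (\<Sum>k=1..n. (h k + h (N - k)) / of_nat k)"
  have "binomial_transform a b N mharm2
      = c * binomial_transform a b n mharm2 + a * binomial_transform a b n (\<lambda>k. mharm2 (Suc k) - mharm2 k)"
    unfolding N_def c_def by (rule binomial_transform_Suc_diff)
  also have "a * binomial_transform a b n (\<lambda>k. mharm2 (Suc k) - mharm2 k)
      = 2 * (a * binomial_transform a b n (\<lambda>k. harm (Suc k - 1) / of_nat (Suc k)))"
    unfolding mharm2_Suc binomial_transform_mult[symmetric] by (simp add: mult_ac)
  also have "a * binomial_transform a b n (\<lambda>k. harm (Suc k - 1) / of_nat (Suc k))
      = binomial_transform a b N (\<lambda>j. harm (j - 1)) / of_nat N"
    using binomial_transform_shift_div[of a b n "\<lambda>j. harm (j - 1)"]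
    unfolding N_def by (simp add: harm_expand(1))
  finally have transform_Suc: "binomial_transform a b N mharm2
      = c * binomial_transform a b n mharm2 + 2 * (binomial_transform a b N (\<lambda>j. harm (j - 1)) / of_nat N)" .
  have transform_harm_pred: "binomial_transform a b N (\<lambda>j. harm (j - 1)) = (c ^ N + b ^ N) * harm n - \<Sigma>"
    unfolding binomial_transform_harm_pred \<Sigma>_def h_def c_def N_def
    by (simp add: harm_Suc field_simps del: of_nat_Suc)
  have gap_Suc: "harm_gap_sum c b N = c * harm_gap_sum c b n + b ^ N * harm n / of_nat N - \<Sigma> / of_nat N"
    unfolding N_def harm_gap_sum_Suc \<Sigma>_def h_def sum_div_mult_complement by simp
  have "binomial_transform a b N mharm2
      = c * (mharm2 n * c ^ n + 2 * harm_gap_sum c b n) + 2 * (((c ^ N + b ^ N) * harm n - \<Sigma>) / of_nat N)"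
    unfolding transform_Suc transform_harm_pred Suc.IH c_def ..
  also have "\<dots> = mharm2 N * c ^ N + 2 * harm_gap_sum c b N"
    unfolding gap_Suc unfolding N_def mharm2_Suc by (simp add: divide_inverse algebra_simps)
  finally show ?case unfolding N_def c_def .
qed (simp add: harm_gap_sum_def)

theorem corollary4:
  fixes a b :: complex and n :: nat
  shows "(\<Sum>k=0..n. of_nat (n choose k) * a ^ k * b ^ (n - k) * mharm2 k)
         = mharm2 n * (a + b) ^ n
           + 2 * (\<Sum>k=1..n. (a + b) ^ (n - k) * b ^ k * ((harm (k - 1) - harm (n - k)) / of_nat k))"
  using binomial_transform_mharm2[of a b n] unfolding binomial_transform_def harm_gap_sum_def .

end
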